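(* Let $S_0,S_1$ be semi-infinite stacks that are neighbors. Then for every finite word $W$ in $\Theta$, the stacks $\overline{S_0W}$ and $\overline{S_1W}$ are neighbors.
   Context: Fix an integer $k\ge 2$. Let $\Theta=\{b_1,\dots,b_k,o_1,\dots,o_k,F\}$, where $b_i$ is a burger of type $i$, $o_i$ is an order of type $i$, and $F$ is a flexible order. A semi-infinite stack is an infinite sequence of burgers indexed to the left, i.e. of the form $\cdots s_3s_2s_1$ with $s_1$ the rightmost (top) burger. For a stack $S$ and a finite word $W$, $\overline{SW}$ is obtained by processing $W$ left to right: - a burger is appended on the right; - $o_i$ removes the rightmost $b_i$ present at that time; - $F$ removes the rightmost burger present at that time. (Assume the stacks contain infinitely many burgers of each type, so that every order can be fulfilled.) Two semi-infinite stacks are neighbors if one can be obtained from the other by deleting a single burger, at an arbitrary position. *)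

theory Defs
  imports Main
begin

text \<open>Letters of the alphabet Theta: Bur i is the burger b_i, Ord i is the order o_i,
  Flex is the flexible order F.  Types range over {1..k}.\<close>
datatype letter = Bur nat | Ord nat | Flex

text \<open>A semi-infinite stack ... s_3 s_2 s_1 is a function nat => nat, where
  s 0 is the rightmost (top) burger s_1, s 1 is s_2, etc.; the value is the burger type.\<close>
type_synonym stack = "nat \<Rightarrow> nat"

definition del_at :: "stack \<Rightarrow> nat \<Rightarrow> stack" where
  "del_at s m = (\<lambda>n. if n < m then s n else s (Suc n))"

definition push :: "stack \<Rightarrow> nat \<Rightarrow> stack" where
  "push s i = (\<lambda>n. if n = 0 then i else s (n - 1))"

definition step :: "stack \<Rightarrow> letter \<Rightarrow> stack" where
  "step s c = (case c of
      Bur i \<Rightarrow> push s i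
    | Ord i \<Rightarrow> del_at s (LEAST n. s n = i)
    | Flex \<Rightarrow> del_at s 0)"

definition process :: "stack \<Rightarrow> letter list \<Rightarrow> stack" where
  "process s w = foldl step s w"

definition neighbors :: "stack \<Rightarrow> stack \<Rightarrow> bool" where
  "neighbors s t \<longleftrightarrow> (\<exists>m. t = del_at s m \<or> s = del_at t m)"

definition valid_stack :: "nat \<Rightarrow> stack \<Rightarrow> bool" where
  "valid_stack k s \<longleftrightarrow> (\<forall>n. s n \<in> {1..k}) \<and> (\<forall>i\<in>{1..k}. infinite {n. s n = i})"

definition valid_letter :: "nat \<Rightarrow> letter \<Rightarrow> bool" where
  "valid_letter k c = (case c of Bur i \<Rightarrow> i \<in> {1..k} | Ord i \<Rightarrow> i \<in> {1..k} | Flex \<Rightarrow> True)"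

end

theory Submission
  imports Defs
begin

text \<open>If T is S with the burger at position m deleted, then after any letter the two stacks
  still differ by one deleted burger: a push shifts the deleted position up by one, and a
  removal at position l either removes the deleted burger itself or commutes with its
  deletion. For an order o_i this needs T to still contain a b_i (if the first b_i of S is
  the deleted one, T serves the next b_i). Deletion and pushing preserve infinitely many
  burgers of each type, so the argument iterates along the word.\<close>

lemma del_at_commute:
  "a < b \<Longrightarrow> del_at (del_at s b) a = del_at (del_at s a) (b - 1)"
  by (auto simp: del_at_def fun_eq_iff)

lemma push_del_at: "push (del_at s m) i = del_at (push s i) (Suc m)"
  by (auto simp: push_def del_at_def fun_eq_iff)

lemma infinite_del_at:
  assumes "infinite {n. s n = i}"
  shows "infinite {n. del_at s m n = i}"
proof -
  have "{n. s n = i} \<subseteq> {..m} \<union> Suc ` {n. del_at s m n = i}"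
  proof
    fix n assume "n \<in> {n. s n = i}"
    then show "n \<in> {..m} \<union> Suc ` {n. del_at s m n = i}"
      by (cases n) (auto simp: del_at_def)
  qed
  from infinite_super[OF this assms] show ?thesis
    by (simp add: finite_image_iff)
qed

lemma infinite_push:
  assumes "infinite {n. s n = i}"
  shows "infinite {n. push s j n = i}"
proof -
  have "Suc ` {n. s n = i} \<subseteq> {n. push s j n = i}"
    by (auto simp: push_def)
  moreover have "infinite (Suc ` {n. s n = i})"
    using assms by (simp add: finite_image_iff)
  ultimately show ?thesis
    by (rule infinite_super)
qed

lemma infinite_step:
  "infinite {n. s n = i} \<Longrightarrow> infinite {n. step s c n = i}"
  by (cases c) (auto simp: step_def infinite_del_at infinite_push)

lemma Least_del_at:
  assumes "s l = i" and "\<forall>n<l. s n \<noteq> i" and "m \<noteq> l"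
  shows "(LEAST n. del_at s m n = i) = (if m < l then l - 1 else l)"
proof (rule Least_equality)
  show "del_at s m (if m < l then l - 1 else l) = i"
    using assms by (auto simp: del_at_def)
next
  fix y assume y: "del_at s m y = i"
  show "(if m < l then l - 1 else l) \<le> y"
  proof (cases "y < m")
    case True
    then have "l \<le> y"
      using y assms(2) by (force simp: del_at_def not_less)
    then show ?thesis by auto
  next
    case False
    then have "l \<le> Suc y"
      using y assms(2) by (force simp: del_at_def not_less)
    then show ?thesis using False assms(3) by auto
  qed
qed

lemma step_del_at:
  assumes ordered_present: "\<And>i. c = Ord i \<Longrightarrow> \<exists>n. del_at s m n = i"
  shows "\<exists>m'. step (del_at s m) c = del_at (step s c) m'"
proof (cases c)
  case (Bur i)
  then show ?thesis
    by (auto simp: step_def push_del_at)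
next
  case Flex
  then show ?thesis
    using del_at_commute[of 0 m s] by (cases "m = 0") (auto simp: step_def)
next
  case (Ord i)
  define l where "l = (LEAST n. s n = i)"
  have "\<exists>n. s n = i"
    using ordered_present[OF Ord] by (auto simp: del_at_def)
  then have first: "s l = i" "\<forall>n<l. s n \<noteq> i"
    unfolding l_def by (auto intro: LeastI_ex dest: not_less_Least)
  have step_s: "step s c = del_at s l"
    using Ord by (simp add: step_def l_def)
  consider "m = l" | "m < l" | "l < m" by linarith
  then show ?thesis
  proof cases
    case 1
    then show ?thesis
      using Ord step_s by (auto simp: step_def)
  next
    case 2
    have "step (del_at s m) c = del_at (del_at s m) (l - 1)"
      using 2 Ord Least_del_at[OF first] by (simp add: step_def)
    also have "\<dots> = del_at (step s c) m"
      using step_s del_at_commute[OF 2] by simp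
    finally show ?thesis ..
  next
    case 3
    have "step (del_at s m) c = del_at (del_at s m) l"
      using 3 Ord Least_del_at[OF first] by (simp add: step_def)
    also have "\<dots> = del_at (step s c) (m - 1)"
      using step_s del_at_commute[OF 3] by simp
    finally show ?thesis ..
  qed
qed

lemma process_del_at:
  assumes "\<And>i. Ord i \<in> set W \<Longrightarrow> infinite {n. del_at s m n = i}"
  shows "\<exists>m'. process (del_at s m) W = del_at (process s W) m'"
  using assms
proof (induction W arbitrary: s m)
  case Nil
  show ?case
    by (auto simp: process_def)
next
  case (Cons c W)
  have "\<exists>m'. step (del_at s m) c = del_at (step s c) m'"
    using Cons.prems by (intro step_del_at) (auto dest: not_finite_existsD)
  then obtain m' where m': "step (del_at s m) c = del_at (step s c) m'" ..
  have "infinite {n. del_at (step s c) m' n = i}" if "Ord i \<in> set W" for i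
    using Cons.prems[of i] that infinite_step[of "del_at s m" i c] by (auto simp: m')
  from Cons.IH[OF this] show ?case
    by (simp add: process_def m')
qed

lemma neighbors_process:
  assumes "neighbors S0 S1"
    and "\<And>i. Ord i \<in> set W \<Longrightarrow> infinite {n. S0 n = i} \<and> infinite {n. S1 n = i}"
  shows "neighbors (process S0 W) (process S1 W)"
proof -
  obtain m where "S1 = del_at S0 m \<or> S0 = del_at S1 m"
    using assms(1) by (auto simp: neighbors_def)
  then show ?thesis
    using process_del_at[of W S0 m] process_del_at[of W S1 m] assms(2)
    by (auto simp: neighbors_def)
qed

theorem lemma5p3:
  fixes k :: nat and S0 S1 :: stack and W :: "letter list"
  assumes "k \<ge> 2"
    and "valid_stack k S0" and "valid_stack k S1"
    and "neighbors S0 S1"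
    and "\<forall>c\<in>set W. valid_letter k c"
  shows "neighbors (process S0 W) (process S1 W)"
proof (rule neighbors_process[OF assms(4)])
  fix i assume "Ord i \<in> set W"
  then have "i \<in> {1..k}"
    using assms(5) by (fastforce simp: valid_letter_def)
  then show "infinite {n. S0 n = i} \<and> infinite {n. S1 n = i}"
    using assms(2,3) by (simp add: valid_stack_def)
qed

end
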